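(* Let $G$ be a finite group, $\Lambda$ an absolutely irreducible $\mathbb Z[G]$-module of finite rank, $W=\Lambda\otimes\mathbb Q$, $w$ a weight with associated form $(\,,\,)$, $H=\mathrm{Stab}_G(w)$, and let $\{g_1,\dots,g_d\}$ be a set of representatives of the left cosets of $H$ in $G$. Then $(g_iw,g_jw)-(w,w)-1$ is a non-negative integer for all $i\ne j$.
   Context: A weight of $\Lambda$ is $w\in W$ with $gw-w\in\Lambda$ for all $g\in G$. $(\,,\,)$ is the negative definite $G$-invariant symmetric bilinear form on $W$ such that (i) $(w,\lambda)\in\mathbb Z$ for all $\lambda\in\Lambda$, and (ii) every $G$-invariant symmetric bilinear form satisfying (i) is an integer multiple of it. $H=\{g\in G:gw=w\}$. *)

theory Defs
  imports "HOL-Analysis.Finite_Cartesian_Product" "HOL-Algebra.Coset"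
begin

text \<open>A representation of the group G on the lattice Lambda = Z^n is given by
  integer matrices rho g.  W = Lambda (x) Q is rat^'n, Lambda (x) C is complex^'n.\<close>

definition of_int_mat :: "int^'n^'m \<Rightarrow> ('a::ring_1)^'n^'m" where
  "of_int_mat A = (\<chi> i j. of_int (A $ i $ j))"

definition is_int_rep :: "('g, 'b) monoid_scheme \<Rightarrow> ('g \<Rightarrow> int^'n^'n) \<Rightarrow> bool" where
  "is_int_rep G \<rho> \<longleftrightarrow> \<rho> \<one>\<^bsub>G\<^esub> = mat 1 \<and>
     (\<forall>g\<in>carrier G. \<forall>h\<in>carrier G. \<rho> (g \<otimes>\<^bsub>G\<^esub> h) = \<rho> g ** \<rho> h)"

definition lattice :: "(rat^'n) set" where
  "lattice = {v. \<forall>i. v $ i \<in> \<int>}"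

definition complex_subspace :: "(complex^'n) set \<Rightarrow> bool" where
  "complex_subspace S \<longleftrightarrow> 0 \<in> S \<and> (\<forall>x\<in>S. \<forall>y\<in>S. x + y \<in> S) \<and> (\<forall>c. \<forall>x\<in>S. c *s x \<in> S)"

definition abs_irreducible :: "('g, 'b) monoid_scheme \<Rightarrow> ('g \<Rightarrow> int^'n^'n) \<Rightarrow> bool" where
  "abs_irreducible G \<rho> \<longleftrightarrow>
     (\<forall>S. complex_subspace S \<and> (\<forall>g\<in>carrier G. \<forall>v\<in>S. (of_int_mat (\<rho> g) :: complex^'n^'n) *v v \<in> S)
        \<longrightarrow> S = {0} \<or> S = UNIV)"

definition is_weight :: "('g, 'b) monoid_scheme \<Rightarrow> ('g \<Rightarrow> int^'n^'n) \<Rightarrow> rat^'n \<Rightarrow> bool" where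
  "is_weight G \<rho> w \<longleftrightarrow> (\<forall>g\<in>carrier G. (of_int_mat (\<rho> g) :: rat^'n^'n) *v w - w \<in> lattice)"

definition sym_bilinear :: "(rat^'n \<Rightarrow> rat^'n \<Rightarrow> rat) \<Rightarrow> bool" where
  "sym_bilinear B \<longleftrightarrow> (\<forall>x y. B x y = B y x) \<and> (\<forall>x y z. B (x + y) z = B x z + B y z)
     \<and> (\<forall>c x y. B (c *s x) y = c * B x y)"

definition G_invariant_form :: "('g, 'b) monoid_scheme \<Rightarrow> ('g \<Rightarrow> int^'n^'n) \<Rightarrow> (rat^'n \<Rightarrow> rat^'n \<Rightarrow> rat) \<Rightarrow> bool" where
  "G_invariant_form G \<rho> B \<longleftrightarrow> (\<forall>g\<in>carrier G. \<forall>x y.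
     B ((of_int_mat (\<rho> g) :: rat^'n^'n) *v x) ((of_int_mat (\<rho> g) :: rat^'n^'n) *v y) = B x y)"

definition neg_definite :: "(rat^'n \<Rightarrow> rat^'n \<Rightarrow> rat) \<Rightarrow> bool" where
  "neg_definite B \<longleftrightarrow> (\<forall>x. x \<noteq> 0 \<longrightarrow> B x x < 0)"

definition integral_on :: "(rat^'n \<Rightarrow> rat^'n \<Rightarrow> rat) \<Rightarrow> rat^'n \<Rightarrow> bool" where
  "integral_on B w \<longleftrightarrow> (\<forall>l\<in>lattice. B w l \<in> \<int>)"

definition assoc_form :: "('g, 'b) monoid_scheme \<Rightarrow> ('g \<Rightarrow> int^'n^'n) \<Rightarrow> rat^'n \<Rightarrow> (rat^'n \<Rightarrow> rat^'n \<Rightarrow> rat) \<Rightarrow> bool" where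
  "assoc_form G \<rho> w B \<longleftrightarrow> sym_bilinear B \<and> G_invariant_form G \<rho> B \<and> neg_definite B \<and> integral_on B w \<and>
     (\<forall>B'. sym_bilinear B' \<and> G_invariant_form G \<rho> B' \<and> integral_on B' w \<longrightarrow>
        (\<exists>k::int. \<forall>x y. B' x y = of_int k * B x y))"

definition stabilizer :: "('g, 'b) monoid_scheme \<Rightarrow> ('g \<Rightarrow> int^'n^'n) \<Rightarrow> rat^'n \<Rightarrow> 'g set" where
  "stabilizer G \<rho> w = {g\<in>carrier G. (of_int_mat (\<rho> g) :: rat^'n^'n) *v w = w}"

end

theory Submission
  imports Defs
begin

text \<open>Put \<open>u = g\<^sub>1 w\<close> and \<open>v = g\<^sub>2 w\<close>. They are distinct because the cosets differ, and
  \<open>v - u = (v - w) - (u - w)\<close> lies in the lattice because \<open>w\<close> is a weight. By invariance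
  \<open>(u, v - u) = (w, g\<^sub>1\<^sup>-\<^sup>1 (v - u))\<close>, an integer by condition (i), so \<open>(u, v) - (w, w)\<close> is an
  integer. Finally \<open>0 > (v - u, v - u) = 2 (w, w) - 2 (u, v)\<close> makes it positive.\<close>

lemma of_int_mat_mult:
  "(of_int_mat (A ** B) :: 'a::comm_ring_1^_^_) = of_int_mat A ** of_int_mat B"
  by (simp add: of_int_mat_def matrix_matrix_mult_def vec_eq_iff)

lemma of_int_mat_one: "(of_int_mat (mat 1) :: 'a::comm_ring_1^_^_) = mat 1"
  by (simp add: of_int_mat_def mat_def vec_eq_iff)

lemma is_int_rep_mult_action:
  assumes "is_int_rep G \<rho>" "g \<in> carrier G" "h \<in> carrier G"
  shows "(of_int_mat (\<rho> (g \<otimes>\<^bsub>G\<^esub> h)) :: 'a::comm_ring_1^'n^'n) *v x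
           = of_int_mat (\<rho> g) *v (of_int_mat (\<rho> h) *v x)"
  using assms unfolding is_int_rep_def by (simp add: of_int_mat_mult matrix_vector_mul_assoc)

lemma is_int_rep_one_action:
  assumes "is_int_rep G \<rho>"
  shows "(of_int_mat (\<rho> \<one>\<^bsub>G\<^esub>) :: 'a::comm_ring_1^'n^'n) *v x = x"
  using assms unfolding is_int_rep_def by (simp add: of_int_mat_one)

lemma is_int_rep_inv_action:
  assumes "group G" "is_int_rep G \<rho>" "g \<in> carrier G"
  shows "(of_int_mat (\<rho> (inv\<^bsub>G\<^esub> g)) :: 'a::comm_ring_1^'n^'n) *v (of_int_mat (\<rho> g) *v x) = x"
    and "(of_int_mat (\<rho> g) :: 'a::comm_ring_1^'n^'n) *v (of_int_mat (\<rho> (inv\<^bsub>G\<^esub> g)) *v x) = x"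
  using is_int_rep_mult_action[OF assms(2), of "inv\<^bsub>G\<^esub> g" g x]
    is_int_rep_mult_action[OF assms(2), of g "inv\<^bsub>G\<^esub> g" x]
    is_int_rep_one_action[OF assms(2), of x] assms
  by (simp_all add: group.l_inv group.r_inv group.inv_closed)

lemma lattice_of_int_mat_mult:
  "v \<in> lattice \<Longrightarrow> (of_int_mat A :: rat^'n^'m) *v v \<in> lattice"
  unfolding lattice_def
  by (auto simp: matrix_vector_mult_def of_int_mat_def intro!: Ints_sum Ints_mult)

lemma lattice_diff: "u \<in> lattice \<Longrightarrow> v \<in> lattice \<Longrightarrow> u - v \<in> lattice"
  unfolding lattice_def by (auto intro: Ints_diff)

lemma weight_orbit_diff_in_lattice:
  assumes "is_weight G \<rho> w" "g \<in> carrier G" "h \<in> carrier G"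
  shows "(of_int_mat (\<rho> g) :: rat^'n^'n) *v w - of_int_mat (\<rho> h) *v w \<in> lattice"
proof -
  have "(of_int_mat (\<rho> g) *v w - w) - (of_int_mat (\<rho> h) *v w - w) \<in> lattice"
    using assms unfolding is_weight_def by (blast intro: lattice_diff)
  then show ?thesis by simp
qed

lemma sym_bilinear_diff_left:
  assumes "sym_bilinear B"
  shows "B (x - y) z = B x z - B y z"
proof -
  have "B (x + (-1) *s y) z = B x z + (-1) * B y z"
    using assms unfolding sym_bilinear_def by metis
  moreover have "x + (-1) *s y = x - y" by (simp add: vec_eq_iff)
  ultimately show ?thesis by simp
qed

lemma sym_bilinear_diff_right:
  "sym_bilinear B \<Longrightarrow> B z (x - y) = B z x - B z y"
  using sym_bilinear_diff_left unfolding sym_bilinear_def by metis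

lemma neg_definite_cross_term_gt:
  assumes "sym_bilinear B" "neg_definite B" "u \<noteq> v" "B u u = c" "B v v = c"
  shows "c < B u v"
proof -
  have "B (v - u) (v - u) < 0" using assms(2,3) unfolding neg_definite_def by simp
  moreover have "B (v - u) (v - u) = B v v - B u v - B v u + B u u"
    by (simp add: sym_bilinear_diff_left[OF assms(1)] sym_bilinear_diff_right[OF assms(1)])
  moreover have "B v u = B u v" using assms(1) unfolding sym_bilinear_def by blast
  ultimately show ?thesis using assms(4,5) by simp
qed

lemma invariant_form_orbit_integral:
  assumes "group G" "is_int_rep G \<rho>" "G_invariant_form G \<rho> B" "integral_on B w"
    and "g \<in> carrier G" "l \<in> lattice"
  shows "B ((of_int_mat (\<rho> g) :: rat^'n^'n) *v w) l \<in> \<int>"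
proof -
  let ?M = "of_int_mat (\<rho> g) :: rat^'n^'n"
  let ?N = "of_int_mat (\<rho> (inv\<^bsub>G\<^esub> g)) :: rat^'n^'n"
  have "?M *v (?N *v l) = l" by (rule is_int_rep_inv_action(2)[OF assms(1,2,5)])
  then have "B (?M *v w) l = B (?M *v w) (?M *v (?N *v l))" by simp
  also have "\<dots> = B w (?N *v l)"
    using assms(3,5) unfolding G_invariant_form_def by blast
  finally show ?thesis
    using assms(4) lattice_of_int_mat_mult[OF assms(6)] unfolding integral_on_def by auto
qed

lemma stabilizer_coset_subset:
  assumes "group G" "is_int_rep G \<rho>" "g \<in> carrier G" "h \<in> carrier G"
    and "(of_int_mat (\<rho> g) :: rat^'n^'n) *v w = of_int_mat (\<rho> h) *v w"
  shows "g <#\<^bsub>G\<^esub> stabilizer G \<rho> w \<subseteq> h <#\<^bsub>G\<^esub> stabilizer G \<rho> w"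
proof
  interpret group G by fact
  fix z assume "z \<in> g <#\<^bsub>G\<^esub> stabilizer G \<rho> w"
  then obtain s where s: "s \<in> stabilizer G \<rho> w" and z: "z = g \<otimes>\<^bsub>G\<^esub> s"
    unfolding l_coset_def by auto
  have s_carrier: "s \<in> carrier G" using s unfolding stabilizer_def by simp
  let ?t = "inv\<^bsub>G\<^esub> h \<otimes>\<^bsub>G\<^esub> g \<otimes>\<^bsub>G\<^esub> s"
  have t_carrier: "?t \<in> carrier G" using assms s_carrier by simp
  have "(of_int_mat (\<rho> ?t) :: rat^'n^'n) *v w
          = of_int_mat (\<rho> (inv\<^bsub>G\<^esub> h)) *v (of_int_mat (\<rho> g) *v (of_int_mat (\<rho> s) *v w))"
    using assms(2-4) s_carrier by (simp add: is_int_rep_mult_action)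
  also have "\<dots> = w"
    using s assms(5) is_int_rep_inv_action(1)[OF assms(1,2,4)] unfolding stabilizer_def by simp
  finally have "?t \<in> stabilizer G \<rho> w" using t_carrier unfolding stabilizer_def by simp
  moreover have "z = h \<otimes>\<^bsub>G\<^esub> ?t" using assms(3,4) s_carrier z by (simp add: m_assoc[symmetric])
  ultimately show "z \<in> h <#\<^bsub>G\<^esub> stabilizer G \<rho> w" unfolding l_coset_def by auto
qed

lemma stabilizer_coset_eq:
  assumes "group G" "is_int_rep G \<rho>" "g \<in> carrier G" "h \<in> carrier G"
    and "(of_int_mat (\<rho> g) :: rat^'n^'n) *v w = of_int_mat (\<rho> h) *v w"
  shows "g <#\<^bsub>G\<^esub> stabilizer G \<rho> w = h <#\<^bsub>G\<^esub> stabilizer G \<rho> w"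
  using stabilizer_coset_subset[OF assms] stabilizer_coset_subset[OF assms(1,2,4,3) assms(5)[symmetric]]
  by (rule subset_antisym)

theorem lemma3p1:
  fixes G :: "('g, 'b) monoid_scheme" and \<rho> :: "'g \<Rightarrow> int^'n^'n"
    and w :: "rat^'n" and B :: "rat^'n \<Rightarrow> rat^'n \<Rightarrow> rat"
  assumes "group G" and "finite (carrier G)"
    and "is_int_rep G \<rho>" and "abs_irreducible G \<rho>"
    and "is_weight G \<rho> w" and "assoc_form G \<rho> w B"
    and "g1 \<in> carrier G" and "g2 \<in> carrier G"
    and "g1 <#\<^bsub>G\<^esub> stabilizer G \<rho> w \<noteq> g2 <#\<^bsub>G\<^esub> stabilizer G \<rho> w"
  shows "B ((of_int_mat (\<rho> g1) :: rat^'n^'n) *v w) ((of_int_mat (\<rho> g2) :: rat^'n^'n) *v w)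
           - B w w - 1 \<in> \<nat>"
proof -
  define u where "u = (of_int_mat (\<rho> g1) :: rat^'n^'n) *v w"
  define v where "v = (of_int_mat (\<rho> g2) :: rat^'n^'n) *v w"
  have sb: "sym_bilinear B" and inv: "G_invariant_form G \<rho> B" and nd: "neg_definite B"
    and int: "integral_on B w" using assms(6) unfolding assoc_form_def by auto
  have uu: "B u u = B w w" and vv: "B v v = B w w"
    using inv assms(7,8) unfolding G_invariant_form_def u_def v_def by auto
  have "u \<noteq> v" using stabilizer_coset_eq[OF assms(1,3,7,8)] assms(9) unfolding u_def v_def by blast
  then have pos: "B w w < B u v" using neg_definite_cross_term_gt[OF sb nd _ uu vv] by blast
  have "B u (v - u) \<in> \<int>"
    using invariant_form_orbit_integral[OF assms(1,3) inv int assms(7)]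
      weight_orbit_diff_in_lattice[OF assms(5,8,7)] unfolding u_def v_def by blast
  then obtain k where k: "B u v - B w w = of_int k"
    using uu by (auto simp: sym_bilinear_diff_right[OF sb] elim: Ints_cases)
  with pos have "B u v - B w w - 1 = of_nat (nat (k - 1))" by simp
  then show ?thesis unfolding u_def v_def by (metis of_nat_in_Nats)
qed

end
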